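(* Consider the following kinetic transport model. Let $\{Z_k\}_{k\ge1}$ be a Markov chain on the two states $\{\mathrm{F},\mathrm{A}\}$ with transition matrix $$\begin{pmatrix}1-a & a\\ b & 1-b\end{pmatrix}$$ (rows and columns indexed by $\mathrm F,\mathrm A$), $a,b\in[0,1]$, $a+b=1$, and with initial distribution equal to the stationary distribution $(\frac{b}{a+b},\frac{a}{a+b})$. Let $K_n=\sum_{k=1}^n \mathbf 1_{\{Z_k=\mathrm F\}}$. Independently of $\{Z_k\}$, let $(X_k,Y_k)_{k\ge1}$ be i.i.d. with $$P((X_k,Y_k)=(j,0))=\alpha,\qquad P((X_k,Y_k)=(0,j))=\beta\qquad (j=\pm1),$$ $\alpha,\beta\ge0$, $\alpha+\beta=1/2$. Let $S(n)=(S_X(n),S_Y(n))=\sum_{k=1}^{K_n}(X_k+1,Y_k)$. Then for $n\ge1$ and $0\le x\le n$, $$\operatorname{Var}(S_Y(n)\mid S_X(n)=n+x)=\operatorname{Var}(S_Y(n)\mid S_X(n)=n-x).$$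
   Context: Conditional variances are considered for conditioning events of positive probability. *)

theory Defs
  imports "HOL-Probability.Probability"
begin

datatype state = F | A

definition trans_pmf :: "real \<Rightarrow> real \<Rightarrow> state \<Rightarrow> state pmf" where
  "trans_pmf a b s = (case s of
      F \<Rightarrow> map_pmf (\<lambda>c. if c then F else A) (bernoulli_pmf (1 - a))
    | A \<Rightarrow> map_pmf (\<lambda>c. if c then F else A) (bernoulli_pmf b))"

definition init_pmf :: "real \<Rightarrow> real \<Rightarrow> state pmf" where
  "init_pmf a b = map_pmf (\<lambda>c. if c then F else A) (bernoulli_pmf (b / (a + b)))"

primrec mc_from :: "(state \<Rightarrow> state pmf) \<Rightarrow> state \<Rightarrow> nat \<Rightarrow> state list pmf" where
  "mc_from P s 0 = return_pmf []"
| "mc_from P s (Suc m) = do {t \<leftarrow> P s; ts \<leftarrow> mc_from P t m; return_pmf (t # ts)}"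

text \<open>Law of (Z_1, ..., Z_n), for n \<ge> 1.\<close>
definition chain_pmf :: "real \<Rightarrow> real \<Rightarrow> nat \<Rightarrow> state list pmf" where
  "chain_pmf a b n = do {z1 \<leftarrow> init_pmf a b; zs \<leftarrow> mc_from (trans_pmf a b) z1 (n - 1);
                         return_pmf (z1 # zs)}"

definition step_pmf :: "real \<Rightarrow> real \<Rightarrow> (int \<times> int) pmf" where
  "step_pmf \<alpha> \<beta> = embed_pmf (\<lambda>p. if p = (1,0) \<or> p = (-1,0) then \<alpha>
                              else if p = (0,1) \<or> p = (0,-1) then \<beta> else 0)"

text \<open>Joint law of (Z_1..Z_n) and independent i.i.d. (X_1,Y_1)..(X_n,Y_n);
  only the first K_n \<le> n steps are ever used.\<close>
definition model_pmf :: "real \<Rightarrow> real \<Rightarrow> real \<Rightarrow> real \<Rightarrow> nat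
    \<Rightarrow> (state list \<times> (int \<times> int) list) pmf" where
  "model_pmf a b \<alpha> \<beta> n = pair_pmf (chain_pmf a b n) (replicate_pmf n (step_pmf \<alpha> \<beta>))"

definition K :: "state list \<Rightarrow> nat" where
  "K zs = length (filter (\<lambda>z. z = F) zs)"

definition SX :: "state list \<times> (int \<times> int) list \<Rightarrow> int" where
  "SX \<omega> = (\<Sum>k<K (fst \<omega>). fst (snd \<omega> ! k) + 1)"

definition SY :: "state list \<times> (int \<times> int) list \<Rightarrow> int" where
  "SY \<omega> = (\<Sum>k<K (fst \<omega>). snd (snd \<omega> ! k))"

definition cond_var :: "'a pmf \<Rightarrow> 'a set \<Rightarrow> ('a \<Rightarrow> real) \<Rightarrow> real" where
  "cond_var M E f = measure_pmf.variance (cond_pmf M E) f"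

end

theory Submission
  imports Defs
begin

text \<open>Since \<open>a + b = 1\<close>, the two rows of the transition matrix coincide, so the chain is
  i.i.d. and every time step independently moves \<open>(S_X, S_Y)\<close> by \<open>(0,0)\<close>, \<open>(2,0)\<close>,
  \<open>(1,-1)\<close>, \<open>(1,1)\<close> with probabilities \<open>c = 1 - b + b\<alpha>\<close>, \<open>e = b\<alpha>\<close>, \<open>b\<beta>\<close>, \<open>b\<beta>\<close>.
  Reflecting \<open>S_X - n\<close> exchanges the step weights \<open>c\<close> and \<open>e\<close> and leaves \<open>S_Y\<close> alone, hence
  \<open>P(S_X = n + x, S_Y = y) c^x = P(S_X = n - x, S_Y = y) e^x\<close> for all \<open>y\<close>. The two fibres
  of \<open>S_X\<close> thus carry proportional laws of \<open>S_Y\<close>, so the conditional laws, and in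
  particular the conditional variances, agree.\<close>

lemma pmf_proportional_eq:
  assumes "\<And>z. pmf p z = \<kappa> * pmf q z"
  shows "p = q"
proof -
  obtain z0 where "z0 \<in> set_pmf q"
    using set_pmf_not_empty[of q] by blast
  then have "\<kappa> \<ge> 0"
    using assms[of z0] pmf_nonneg[of p z0] pmf_positive[of z0 q] by (simp add: zero_le_mult_iff)
  have "ennreal 1 = emeasure (measure_pmf p) UNIV"
    by simp
  also have "\<dots> = (\<integral>\<^sup>+ z. ennreal \<kappa> * ennreal (pmf q z) \<partial>count_space UNIV)"
    using \<open>\<kappa> \<ge> 0\<close> by (simp add: nn_integral_pmf[symmetric] assms ennreal_mult)
  also have "\<dots> = ennreal \<kappa>"
    by (simp add: nn_integral_cmult nn_integral_pmf)
  finally have "\<kappa> = 1"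
    using \<open>\<kappa> \<ge> 0\<close> by (simp add: ennreal_inj)
  with assms show ?thesis
    by (intro pmf_eqI) simp
qed

lemma pmf_map_snd_cond_fibre:
  assumes "measure_pmf.prob R {p. fst p = k} > 0"
  shows "pmf (map_pmf snd (cond_pmf R {p. fst p = k})) y
       = pmf R (k, y) / measure_pmf.prob R {p. fst p = k}"
proof -
  let ?C = "cond_pmf R {p. fst p = k}"
  have ne: "set_pmf R \<inter> {p. fst p = k} \<noteq> {}"
    using assms by (metis measure_pmf_zero_iff less_irrefl)
  have "snd -` {y} \<inter> set_pmf ?C = {(k, y)} \<inter> set_pmf ?C"
    using set_cond_pmf[OF ne] by auto
  then have "pmf (map_pmf snd ?C) y = measure_pmf.prob ?C ({(k, y)} \<inter> set_pmf ?C)"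
    by (metis pmf_map measure_Int_set_pmf)
  also have "\<dots> = pmf ?C (k, y)"
    by (simp add: measure_Int_set_pmf measure_pmf_single)
  finally show ?thesis
    by (simp add: pmf_cond[OF ne])
qed

lemma map_snd_cond_fibres_eq:
  assumes "\<And>y. pmf R (k1, y) = \<kappa> * pmf R (k2, y)"
    and "measure_pmf.prob R {p. fst p = k1} > 0" "measure_pmf.prob R {p. fst p = k2} > 0"
  shows "map_pmf snd (cond_pmf R {p. fst p = k1}) = map_pmf snd (cond_pmf R {p. fst p = k2})"
proof (rule pmf_proportional_eq)
  let ?P = "\<lambda>k. measure_pmf.prob R {p. fst p = k}"
  show "pmf (map_pmf snd (cond_pmf R {p. fst p = k1})) y
      = \<kappa> * ?P k2 / ?P k1 * pmf (map_pmf snd (cond_pmf R {p. fst p = k2})) y" for y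
    using assms by (simp add: pmf_map_snd_cond_fibre)
qed

definition walk_recurrence :: "real \<Rightarrow> real \<Rightarrow> real \<Rightarrow> (nat \<Rightarrow> int \<Rightarrow> int \<Rightarrow> real) \<Rightarrow> bool" where
  "walk_recurrence c e g L \<longleftrightarrow>
     (\<forall>k y. L 0 k y = (if k = 0 \<and> y = 0 then 1 else 0)) \<and>
     (\<forall>n k y. L (Suc n) k y = c * L n k y + e * L n (k - 2) y
                             + g * L n (k - 1) (y - 1) + g * L n (k - 1) (y + 1))"

lemma walk_recurrence_reflection:
  assumes "walk_recurrence c e g L"
  shows "L n (int n + int j) y * c ^ j = L n (int n - int j) y * e ^ j"
proof (induction n arbitrary: j y)
  case 0
  then show ?case
    using assms by (cases j) (simp_all add: walk_recurrence_def)
next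
  case (Suc n)
  have L: "L (Suc n) k y = c * L n k y + e * L n (k - 2) y + g * L n (k - 1) (y - 1) + g * L n (k - 1) (y + 1)"
    for k y using assms by (simp add: walk_recurrence_def)
  show ?case
  proof (cases j)
    case 0
    then show ?thesis by simp
  next
    case (Suc i)
    have IH: "L n (int n + int j') y' * c ^ j' = L n (int n - int j') y' * e ^ j'" for j' y'
      using Suc.IH .
    have "c * L n (int (Suc n) + int j) y * c ^ j = e * L n (int (Suc n) - int j - 2) y * e ^ j"
      using IH[of "Suc j" y] by (simp add: algebra_simps)
    moreover have "e * L n (int (Suc n) + int j - 2) y * c ^ j = c * L n (int (Suc n) - int j) y * e ^ j"
      using IH[of i y] by (simp add: Suc algebra_simps)
    moreover have "L n (int (Suc n) + int j - 1) y' * c ^ j = L n (int (Suc n) - int j - 1) y' * e ^ j" for y'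
      using IH[of j y'] by (simp add: algebra_simps)
    ultimately show ?thesis
      by (simp add: L algebra_simps)
  qed
qed

lemma walk_recurrence_degenerate:
  assumes "walk_recurrence 0 0 g L" "L n k y \<noteq> 0"
  shows "k = int n"
  using assms(2)
proof (induction n arbitrary: k y)
  case 0
  then show ?case
    using assms(1) by (simp add: walk_recurrence_def split: if_splits)
next
  case (Suc n)
  then have "L n (k - 1) (y - 1) \<noteq> 0 \<or> L n (k - 1) (y + 1) \<noteq> 0"
    using assms(1) by (auto simp: walk_recurrence_def)
  then show ?case
    using Suc.IH by fastforce
qed

definition state_pmf :: "real \<Rightarrow> state pmf" where
  "state_pmf b = map_pmf (\<lambda>c. if c then F else A) (bernoulli_pmf b)"

lemma mc_from_constant_kernel: "mc_from (\<lambda>_. Q) s m = replicate_pmf m Q"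
  by (induction m arbitrary: s) simp_all

lemma chain_pmf_iid:
  assumes "a + b = 1" "1 \<le> n"
  shows "chain_pmf a b n = replicate_pmf n (state_pmf b)"
proof -
  have "1 - a = b" using assms(1) by simp
  then have "trans_pmf a b = (\<lambda>_. state_pmf b)"
    by (auto simp: fun_eq_iff trans_pmf_def state_pmf_def split: state.split)
  moreover have "init_pmf a b = state_pmf b"
    using assms(1) by (simp add: init_pmf_def state_pmf_def)
  moreover obtain m where "n = Suc m" using assms(2) by (cases n) auto
  ultimately show ?thesis
    by (simp add: chain_pmf_def mc_from_constant_kernel)
qed

lemma K_Cons: "K (z # zs) = (if z = F then Suc (K zs) else K zs)"
  by (simp add: K_def)

lemma K_le_length: "K zs \<le> length zs"
  by (simp add: K_def)

definition add_step :: "int \<times> int \<Rightarrow> int \<times> int \<Rightarrow> int \<times> int" where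
  "add_step w r = (fst w + 1 + fst r, snd w + snd r)"

definition step_sum :: "nat \<Rightarrow> (int \<times> int) list \<Rightarrow> int \<times> int" where
  "step_sum m ws = (\<Sum>k<m. fst (ws ! k) + 1, \<Sum>k<m. snd (ws ! k))"

lemma step_sum_Cons: "step_sum (Suc m) (w # ws) = add_step w (step_sum m ws)"
  unfolding step_sum_def add_step_def sum.lessThan_Suc_shift by simp

primrec step_sum_pmf :: "(int \<times> int) pmf \<Rightarrow> nat \<Rightarrow> (int \<times> int) pmf" where
  "step_sum_pmf W 0 = return_pmf (0, 0)"
| "step_sum_pmf W (Suc m) = W \<bind> (\<lambda>w. map_pmf (add_step w) (step_sum_pmf W m))"

lemma map_step_sum_replicate_pmf:
  "m \<le> n \<Longrightarrow> map_pmf (step_sum m) (replicate_pmf n W) = step_sum_pmf W m"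
proof (induction m arbitrary: n)
  case 0
  then show ?case by (simp add: step_sum_def map_pmf_const)
next
  case (Suc m)
  then obtain n' where n: "n = Suc n'" "m \<le> n'" by (cases n) auto
  have "map_pmf (step_sum (Suc m)) (replicate_pmf n W)
      = W \<bind> (\<lambda>w. map_pmf (step_sum m) (replicate_pmf n' W) \<bind> (\<lambda>r. return_pmf (add_step w r)))"
    by (simp add: n map_bind_pmf step_sum_Cons bind_map_pmf)
  then show ?case
    using Suc.IH[OF n(2)] by (simp add: map_pmf_def)
qed

definition walk_pmf :: "real \<Rightarrow> (int \<times> int) pmf \<Rightarrow> nat \<Rightarrow> (int \<times> int) pmf" where
  "walk_pmf b W n = replicate_pmf n (state_pmf b) \<bind> (\<lambda>zs. step_sum_pmf W (K zs))"

text \<open>Drawing the next step before or after the rest of the chain commutes, so consuming the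
  first \<open>K_n\<close> steps amounts to consuming a fresh step at every visit to F.\<close>
lemma walk_pmf_Suc:
  "walk_pmf b W (Suc n) = state_pmf b \<bind> (\<lambda>z. if z = F
      then W \<bind> (\<lambda>w. map_pmf (add_step w) (walk_pmf b W n)) else walk_pmf b W n)"
  unfolding walk_pmf_def
  by (simp add: K_Cons bind_assoc_pmf bind_return_pmf map_bind_pmf if_distrib cong: if_cong)
    (rule bind_pmf_cong[OF refl], simp add: bind_commute_pmf[of W])

lemma model_pmf_walk_pmf:
  assumes "a + b = 1" "1 \<le> n"
  shows "map_pmf (\<lambda>\<omega>. (SX \<omega>, SY \<omega>)) (model_pmf a b \<alpha> \<beta> n) = walk_pmf b (step_pmf \<alpha> \<beta>) n"
proof -
  have "(\<lambda>\<omega>. (SX \<omega>, SY \<omega>)) = (\<lambda>\<omega>. step_sum (K (fst \<omega>)) (snd \<omega>))"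
    by (auto simp: SX_def SY_def step_sum_def)
  moreover have "map_pmf (step_sum (K zs)) (replicate_pmf n W) = step_sum_pmf W (K zs)"
    if "zs \<in> set_pmf (replicate_pmf n (state_pmf b))" for zs and W :: "(int \<times> int) pmf"
    using that K_le_length[of zs] by (intro map_step_sum_replicate_pmf) (simp add: set_replicate_pmf)
  ultimately show ?thesis
    unfolding model_pmf_def chain_pmf_iid[OF assms] pair_pmf_def map_bind_pmf walk_pmf_def
    by (auto intro!: bind_pmf_cong simp: map_bind_pmf map_pmf_def[symmetric] map_pmf_comp)
qed

lemma pmf_step_pmf:
  assumes "0 \<le> \<alpha>" "0 \<le> \<beta>" "\<alpha> + \<beta> = 1/2"
  shows "pmf (step_pmf \<alpha> \<beta>) p = (if p = (1,0) \<or> p = (-1,0) then \<alpha>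
                                  else if p = (0,1) \<or> p = (0,-1) then \<beta> else 0)"
  unfolding step_pmf_def
proof (rule pmf_embed_pmf)
  let ?f = "\<lambda>p::int \<times> int. if p = (1,0) \<or> p = (-1,0) then \<alpha> else if p = (0,1) \<or> p = (0,-1) then \<beta> else 0"
  let ?D = "{(1,0), (-1,0), (0,1), (0,-1)} :: (int \<times> int) set"
  show "0 \<le> ?f p" for p
    using assms by auto
  have "(\<integral>\<^sup>+ p. ennreal (?f p) \<partial>count_space UNIV) = (\<Sum>p\<in>?D. ennreal (?f p))"
    by (rule nn_integral_count_space') auto
  also have "\<dots> = ennreal (\<Sum>p\<in>?D. ?f p)"
    using assms by (subst sum_ennreal) auto
  also have "(\<Sum>p\<in>?D. ?f p) = 1"
    using assms by simp
  finally show "(\<integral>\<^sup>+ p. ennreal (?f p) \<partial>count_space UNIV) = 1"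
    by simp
qed

lemma pmf_map_add_step: "pmf (map_pmf (add_step w) M) (k, y) = pmf M (k - fst w - 1, y - snd w)"
proof -
  have "inj (add_step w)"
    by (auto simp: inj_def add_step_def prod_eq_iff)
  moreover have "(k, y) = add_step w (k - fst w - 1, y - snd w)"
    by (simp add: add_step_def)
  ultimately show ?thesis
    by (metis pmf_map_inj')
qed

lemma pmf_walk_pmf_Suc:
  fixes n :: nat
  assumes "0 \<le> b" "b \<le> 1" "0 \<le> \<alpha>" "0 \<le> \<beta>" "\<alpha> + \<beta> = 1/2"
  defines "L \<equiv> \<lambda>k y. pmf (walk_pmf b (step_pmf \<alpha> \<beta>) n) (k, y)"
  shows "pmf (walk_pmf b (step_pmf \<alpha> \<beta>) (Suc n)) (k, y)
    = ((1 - b) + b * \<alpha>) * L k y + b * \<alpha> * L (k - 2) y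
      + b * \<beta> * L (k - 1) (y - 1) + b * \<beta> * L (k - 1) (y + 1)"
proof -
  let ?W = "step_pmf \<alpha> \<beta>" and ?D = "{(1,0), (-1,0), (0,1), (0,-1)} :: (int \<times> int) set"
  have step: "pmf (?W \<bind> (\<lambda>w. map_pmf (add_step w) (walk_pmf b ?W n))) (k, y)
      = \<alpha> * L (k - 2) y + \<alpha> * L k y + \<beta> * L (k - 1) (y - 1) + \<beta> * L (k - 1) (y + 1)"
  proof -
    have "pmf (?W \<bind> (\<lambda>w. map_pmf (add_step w) (walk_pmf b ?W n))) (k, y)
        = (\<Sum>w\<in>?D. L (k - fst w - 1) (y - snd w) * pmf ?W w)"
      unfolding pmf_bind pmf_map_add_step L_def
      by (rule integral_measure_pmf_real)
        (auto simp: pmf_step_pmf[OF assms(3-5)] set_pmf_iff split: if_splits)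
    then show ?thesis
      by (simp add: pmf_step_pmf[OF assms(3-5)] algebra_simps)
  qed
  have "pmf (walk_pmf b ?W (Suc n)) (k, y)
      = b * pmf (?W \<bind> (\<lambda>w. map_pmf (add_step w) (walk_pmf b ?W n))) (k, y) + (1 - b) * L k y"
    using assms(1,2)
    by (simp add: walk_pmf_Suc pmf_bind state_pmf_def L_def integral_map_pmf if_distrib)
  then show ?thesis
    by (simp add: step algebra_simps)
qed

lemma walk_recurrence_walk_pmf:
  assumes "0 \<le> b" "b \<le> 1" "0 \<le> \<alpha>" "0 \<le> \<beta>" "\<alpha> + \<beta> = 1/2"
  shows "walk_recurrence ((1 - b) + b * \<alpha>) (b * \<alpha>) (b * \<beta>)
           (\<lambda>n k y. pmf (walk_pmf b (step_pmf \<alpha> \<beta>) n) (k, y))"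
  unfolding walk_recurrence_def pmf_walk_pmf_Suc[OF assms]
  by (simp add: walk_pmf_def K_def pmf_return bind_return_pmf)

lemma walk_pmf_fibres_proportional:
  fixes n x :: nat
  assumes "0 \<le> b" "b \<le> 1" "0 \<le> \<alpha>" "0 \<le> \<beta>" "\<alpha> + \<beta> = 1/2"
    and "measure_pmf.prob (walk_pmf b (step_pmf \<alpha> \<beta>) n) {p. fst p = int n + int x} > 0"
  obtains \<kappa> where "\<And>y. pmf (walk_pmf b (step_pmf \<alpha> \<beta>) n) (int n + int x, y)
                      = \<kappa> * pmf (walk_pmf b (step_pmf \<alpha> \<beta>) n) (int n - int x, y)"
proof (cases "x = 0")
  case True
  then show ?thesis using that[of 1] by simp
next
  case False
  let ?L = "\<lambda>n k y. pmf (walk_pmf b (step_pmf \<alpha> \<beta>) n) (k, y)"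
  let ?c = "(1 - b) + b * \<alpha>" and ?e = "b * \<alpha>"
  have rec: "walk_recurrence ?c ?e (b * \<beta>) ?L"
    using walk_recurrence_walk_pmf[OF assms(1-5)] .
  have "?c \<noteq> 0" \<comment> \<open>otherwise \<open>e = 0\<close> too and \<open>S_X(n) = n\<close> almost surely\<close>
  proof
    assume "?c = 0"
    moreover have "0 \<le> ?e" "?e \<le> ?c"
      using assms(1-3) by simp_all
    ultimately have "walk_recurrence 0 0 (b * \<beta>) ?L"
      using rec by simp
    then have "?L n (int n + int x) y = 0" for y
      using walk_recurrence_degenerate False by fastforce
    then have "measure_pmf.prob (walk_pmf b (step_pmf \<alpha> \<beta>) n) {p. fst p = int n + int x} = 0"
      by (subst measure_pmf_zero_iff) (auto simp: set_pmf_iff)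
    with assms(6) show False by simp
  qed
  have "?L n (int n + int x) y = (?e / ?c) ^ x * ?L n (int n - int x) y" for y
    using walk_recurrence_reflection[OF rec, of n x y] \<open>?c \<noteq> 0\<close>
    by (simp add: power_divide field_simps)
  with that show ?thesis by blast
qed

lemma model_pmf_SX_fibre:
  assumes "a + b = 1" "1 \<le> n"
  shows "measure_pmf.prob (model_pmf a b \<alpha> \<beta> n) {\<omega>. SX \<omega> = k}
       = measure_pmf.prob (walk_pmf b (step_pmf \<alpha> \<beta>) n) {p. fst p = k}"
  by (simp add: model_pmf_walk_pmf[OF assms, symmetric] vimage_def)

lemma cond_var_SY_eq_walk_pmf:
  assumes "a + b = 1" "1 \<le> n" "measure_pmf.prob (model_pmf a b \<alpha> \<beta> n) {\<omega>. SX \<omega> = k} > 0"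
  shows "cond_var (model_pmf a b \<alpha> \<beta> n) {\<omega>. SX \<omega> = k} (\<lambda>\<omega>. real_of_int (SY \<omega>))
       = measure_pmf.variance (map_pmf snd (cond_pmf (walk_pmf b (step_pmf \<alpha> \<beta>) n) {p. fst p = k}))
           real_of_int"
proof -
  let ?M = "model_pmf a b \<alpha> \<beta> n" and ?f = "\<lambda>\<omega>. (SX \<omega>, SY \<omega>)"
  have E: "?f -` {p. fst p = k} = {\<omega>. SX \<omega> = k}"
    by auto
  have "set_pmf ?M \<inter> ?f -` {p. fst p = k} \<noteq> {}"
    using assms(3) by (metis E measure_pmf_zero_iff less_irrefl)
  from cond_map_pmf[OF this] show ?thesis
    by (simp add: model_pmf_walk_pmf[OF assms(1,2), symmetric] E cond_var_def map_pmf_comp)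
qed

theorem proposition3:
  fixes a b \<alpha> \<beta> :: real and n x :: nat
  assumes "0 \<le> a" "a \<le> 1" "0 \<le> b" "b \<le> 1" "a + b = 1"
    and "0 \<le> \<alpha>" "0 \<le> \<beta>" "\<alpha> + \<beta> = 1/2"
    and "1 \<le> n" "x \<le> n"
    and "measure_pmf.prob (model_pmf a b \<alpha> \<beta> n) {\<omega>. SX \<omega> = int n + int x} > 0"
    and "measure_pmf.prob (model_pmf a b \<alpha> \<beta> n) {\<omega>. SX \<omega> = int n - int x} > 0"
  shows "cond_var (model_pmf a b \<alpha> \<beta> n) {\<omega>. SX \<omega> = int n + int x} (\<lambda>\<omega>. real_of_int (SY \<omega>))
       = cond_var (model_pmf a b \<alpha> \<beta> n) {\<omega>. SX \<omega> = int n - int x} (\<lambda>\<omega>. real_of_int (SY \<omega>))"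
proof -
  let ?R = "walk_pmf b (step_pmf \<alpha> \<beta>) n"
  have pos: "measure_pmf.prob ?R {p. fst p = int n + int x} > 0"
            "measure_pmf.prob ?R {p. fst p = int n - int x} > 0"
    using assms(11,12) by (simp_all add: model_pmf_SX_fibre[OF assms(5,9)])
  obtain \<kappa> where "\<And>y. pmf ?R (int n + int x, y) = \<kappa> * pmf ?R (int n - int x, y)"
    using walk_pmf_fibres_proportional[OF assms(3,4,6-8) pos(1)] by blast
  from map_snd_cond_fibres_eq[OF this pos] show ?thesis
    by (simp add: cond_var_SY_eq_walk_pmf[OF assms(5,9)] assms(11,12))
qed

end
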